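(* Let $G$ be a countably infinite structure in a finite relational language. Then $G$ is strongly online categorical if and only if $G$ is homogeneous. Moreover, the "only if" direction holds even if, in the definition of strong online categoricity, the function $F$ is only required to be total (not necessarily primitive recursive or even computable).
   Context: A presentation of $G$ is a structure with domain $\mathbb{N}$ isomorphic to $G$. For a presentation $\alpha$ and $m\in\mathbb{N}$, $\alpha\upharpoonright m$ denotes the finite string coding the atomic diagram of the substructure of $\alpha$ on $\{0,\dots,m-1\}$. $G$ is strongly online categorical if there is a primitive recursive function $F$ such that for all presentations $\alpha,\beta$ of $G$, the map $i\mapsto F(\alpha\upharpoonright(i+1),\beta\upharpoonright(i+1),i)$ is an isomorphism from $\alpha$ onto $\beta$ (so the image of element $i$ is determined from the substructures of both presentations on $\{0,\dots,i\}$, and lies in $\{0,\dots,i\}$). $G$ is homogeneous (in the sense of this paper) if for every finite tuple $\bar x$ of elements of $G$ and every pair of elements $y,z$ of $G$ not occurring in $\bar x$, there is an automorphism of $G$ fixing $\bar x$ pointwise and mapping $y$ to $z$. *)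

theory Defs
  imports Main "HOL-Library.Countable_Set" "HOL-Library.Nat_Bijection"
begin

text \<open>A function on argument lists; only its values on lists of length n matter.\<close>
inductive prim_rec :: "nat \<Rightarrow> (nat list \<Rightarrow> nat) \<Rightarrow> bool" where
  pr_zero: "prim_rec n (\<lambda>_. 0)"
| pr_succ: "prim_rec 1 (\<lambda>xs. Suc (hd xs))"
| pr_proj: "i < n \<Longrightarrow> prim_rec n (\<lambda>xs. xs ! i)"
| pr_comp: "prim_rec m g \<Longrightarrow> length fs = m \<Longrightarrow> (\<forall>f\<in>set fs. prim_rec n f)
            \<Longrightarrow> prim_rec n (\<lambda>xs. g (map (\<lambda>f. f xs) fs))"
| pr_rec: "prim_rec n g \<Longrightarrow> prim_rec (Suc (Suc n)) h
           \<Longrightarrow> prim_rec (Suc n) (\<lambda>xs. rec_nat (g (tl xs)) (\<lambda>y r. h (y # r # tl xs)) (hd xs))"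
| pr_ext: "prim_rec n f \<Longrightarrow> (\<forall>xs. length xs = n \<longrightarrow> f xs = f' xs) \<Longrightarrow> prim_rec n f'"

definition prim_rec3 :: "(nat \<Rightarrow> nat \<Rightarrow> nat \<Rightarrow> nat) \<Rightarrow> bool" where
  "prim_rec3 F \<longleftrightarrow> prim_rec 3 (\<lambda>xs. F (xs ! 0) (xs ! 1) (xs ! 2))"

text \<open>A finite relational language is a list ar of arities: symbol i (i < length ar) has
  arity ar ! i. A structure with carrier A interprets symbol i by R i, a predicate on
  tuples (lists) of length ar ! i.\<close>

definition automorphism :: "nat list \<Rightarrow> 'a set \<Rightarrow> (nat \<Rightarrow> 'a list \<Rightarrow> bool) \<Rightarrow> ('a \<Rightarrow> 'a) \<Rightarrow> bool" where
  "automorphism ar A R h \<longleftrightarrow> bij_betw h A A \<and>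
     (\<forall>i < length ar. \<forall>xs. set xs \<subseteq> A \<longrightarrow> length xs = ar ! i \<longrightarrow> (R i (map h xs) \<longleftrightarrow> R i xs))"

definition homogeneous :: "nat list \<Rightarrow> 'a set \<Rightarrow> (nat \<Rightarrow> 'a list \<Rightarrow> bool) \<Rightarrow> bool" where
  "homogeneous ar A R \<longleftrightarrow>
     (\<forall>xs y z. set xs \<subseteq> A \<longrightarrow> y \<in> A \<longrightarrow> z \<in> A \<longrightarrow> y \<notin> set xs \<longrightarrow> z \<notin> set xs \<longrightarrow>
        (\<exists>h. automorphism ar A R h \<and> (\<forall>x\<in>set xs. h x = x) \<and> h y = z))"

definition presentation :: "nat list \<Rightarrow> 'a set \<Rightarrow> (nat \<Rightarrow> 'a list \<Rightarrow> bool) \<Rightarrow> (nat \<Rightarrow> nat list \<Rightarrow> bool) \<Rightarrow> bool" where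
  "presentation ar A R P \<longleftrightarrow> (\<exists>f. bij_betw f UNIV A \<and>
     (\<forall>i < length ar. \<forall>xs. length xs = ar ! i \<longrightarrow> (P i xs \<longleftrightarrow> R i (map f xs))))"

definition nat_iso :: "nat list \<Rightarrow> (nat \<Rightarrow> nat list \<Rightarrow> bool) \<Rightarrow> (nat \<Rightarrow> nat list \<Rightarrow> bool) \<Rightarrow> (nat \<Rightarrow> nat) \<Rightarrow> bool" where
  "nat_iso ar P Q g \<longleftrightarrow> bij g \<and>
     (\<forall>i < length ar. \<forall>xs. length xs = ar ! i \<longrightarrow> (P i xs \<longleftrightarrow> Q i (map g xs)))"

text \<open>Code (a natural number) of the atomic diagram of the substructure on {0..<m}:
  for each symbol i and each tuple over {0..<m} of length ar ! i (in the canonical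
  enumeration n_lists), one bit; the bit string is coded via list_encode.\<close>
definition diag_code :: "nat list \<Rightarrow> (nat \<Rightarrow> nat list \<Rightarrow> bool) \<Rightarrow> nat \<Rightarrow> nat" where
  "diag_code ar P m = list_encode (concat (map (\<lambda>i. map (\<lambda>xs. if P i xs then 1 else 0)
       (List.n_lists (ar ! i) [0..<m])) [0..<length ar]))"

definition online_iso_witness :: "nat list \<Rightarrow> 'a set \<Rightarrow> (nat \<Rightarrow> 'a list \<Rightarrow> bool) \<Rightarrow> (nat \<Rightarrow> nat \<Rightarrow> nat \<Rightarrow> nat) \<Rightarrow> bool" where
  "online_iso_witness ar A R F \<longleftrightarrow>
     (\<forall>P Q. presentation ar A R P \<longrightarrow> presentation ar A R Q \<longrightarrow>
        (\<forall>i. F (diag_code ar P (Suc i)) (diag_code ar Q (Suc i)) i \<le> i) \<and>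
        nat_iso ar P Q (\<lambda>i. F (diag_code ar P (Suc i)) (diag_code ar Q (Suc i)) i))"

definition strongly_online_categorical :: "nat list \<Rightarrow> 'a set \<Rightarrow> (nat \<Rightarrow> 'a list \<Rightarrow> bool) \<Rightarrow> bool" where
  "strongly_online_categorical ar A R \<longleftrightarrow> (\<exists>F. prim_rec3 F \<and> online_iso_witness ar A R F)"

definition total_online_categorical :: "nat list \<Rightarrow> 'a set \<Rightarrow> (nat \<Rightarrow> 'a list \<Rightarrow> bool) \<Rightarrow> bool" where
  "total_online_categorical ar A R \<longleftrightarrow> (\<exists>F. online_iso_witness ar A R F)"

end

theory Submission
  imports Defs
begin

text \<open>Homogeneity in this strong sense means that any two injective tuples of the same
  length have the same atomic type, so every presentation has the same atomic diagram: the
  one determined by equality patterns alone. Hence the identity is an isomorphism between any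
  two presentations, and the online function F a b i = i witnesses strong online
  categoricity. Conversely, if F is an online isomorphism, its image of i lies below i while
  it is a bijection, which forces it to be the identity; so any two presentations have equal
  diagrams. Enumerating A once as xs, y, ... and once as xs, z, ..., the composite of the
  two enumerations is then an automorphism fixing xs and sending y to z.\<close>

lemma enumeration_with_prefix:
  assumes "countable A" "infinite A" "distinct xs" "set xs \<subseteq> A"
  obtains f where "bij_betw f UNIV A" "\<And>i. i < length xs \<Longrightarrow> f i = xs ! i"
proof -
  let ?n = "length xs"
  obtain g where g: "bij_betw g (UNIV :: nat set) (A - set xs)"
    using assms by (meson countable_Diff countable_infiniteE' finite_set Diff_infinite_finite)
  define f where "f i = (if i < ?n then xs ! i else g (i - ?n))" for i
  have "bij_betw f {..<?n} (set xs)"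
    using bij_betw_nth[OF assms(3) refl refl]
    by (rule bij_betw_cong[THEN iffD1, rotated]) (simp add: f_def)
  moreover have "bij_betw (\<lambda>i. i - ?n) {?n..} UNIV"
    by (rule bij_betw_byWitness[where f' = "\<lambda>k. k + ?n"]) auto
  then have "bij_betw (g \<circ> (\<lambda>i. i - ?n)) {?n..} (A - set xs)"
    using g by (rule bij_betw_trans)
  then have "bij_betw f {?n..} (A - set xs)"
    by (rule bij_betw_cong[THEN iffD1, rotated]) (simp add: f_def)
  ultimately have "bij_betw f ({..<?n} \<union> {?n..}) (set xs \<union> (A - set xs))"
    by (rule bij_betw_combine) auto
  moreover have "{..<?n} \<union> {?n..} = UNIV" "set xs \<union> (A - set xs) = A"
    using assms(4) by auto
  ultimately show thesis using that by (simp add: f_def)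
qed

lemma automorphism_id: "automorphism ar A R id"
  by (simp add: automorphism_def)

lemma automorphism_comp:
  assumes h: "automorphism ar A R h" and g: "automorphism ar A R g"
  shows "automorphism ar A R (h \<circ> g)"
  unfolding automorphism_def
proof (intro conjI allI impI)
  show "bij_betw (h \<circ> g) A A"
    using assms bij_betw_trans by (auto simp: automorphism_def)
next
  fix i xs assume i: "i < length ar" and xs: "set xs \<subseteq> A" "length xs = ar ! i"
  have "set (map g xs) \<subseteq> A"
    using g xs by (auto simp: automorphism_def bij_betw_def)
  then have "R i (map h (map g xs)) \<longleftrightarrow> R i (map g xs)"
    using h i xs unfolding automorphism_def by (metis length_map)
  also have "\<dots> \<longleftrightarrow> R i xs"
    using g i xs by (simp add: automorphism_def)
  finally show "R i (map (h \<circ> g) xs) \<longleftrightarrow> R i xs" by simp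
qed

lemma homogeneous_extend_automorphism:
  assumes hom: "homogeneous ar A R"
    and "length us = length vs" "distinct us" "distinct vs" "set us \<subseteq> A" "set vs \<subseteq> A"
  shows "\<exists>h. automorphism ar A R h \<and> map h us = vs"
  using assms(2-)
proof (induction us arbitrary: vs rule: rev_induct)
  case Nil
  then show ?case using automorphism_id by auto
next
  case (snoc u us)
  then obtain vs' v where vs: "vs = vs' @ [v]"
    by (metis length_Suc_conv_rev length_append_singleton)
  with snoc obtain g where g: "automorphism ar A R g" "map g us = vs'"
    by auto
  have "g u \<notin> set vs'"
  proof
    assume "g u \<in> set vs'"
    then obtain w where "w \<in> set us" "g w = g u"
      using g(2) by auto
    moreover have "inj_on g A"
      using g(1) by (simp add: automorphism_def bij_betw_def)
    ultimately show False
      using snoc.prems by (auto simp: inj_on_def)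
  qed
  moreover have "g u \<in> A"
    using g(1) snoc.prems by (auto simp: automorphism_def bij_betw_def)
  moreover have "set vs' \<subseteq> A" "v \<in> A" "v \<notin> set vs'"
    using snoc.prems vs by auto
  ultimately obtain h where h: "automorphism ar A R h" "\<forall>x\<in>set vs'. h x = x" "h (g u) = v"
    using hom unfolding homogeneous_def by blast
  have "map (h \<circ> g) (us @ [u]) = vs"
    using g(2) h vs by (auto simp: map_idI)
  then show ?case
    using automorphism_comp[OF h(1) g(1)] by blast
qed

lemma homogeneous_relation_invariant:
  assumes hom: "homogeneous ar A R" and "i < length ar" "length xs = ar ! i"
    and f: "inj_on f (set xs)" "f ` set xs \<subseteq> A"
    and g: "inj_on g (set xs)" "g ` set xs \<subseteq> A"
  shows "R i (map f xs) \<longleftrightarrow> R i (map g xs)"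
proof -
  let ?ds = "remdups xs"
  obtain h where h: "automorphism ar A R h" "map h (map f ?ds) = map g ?ds"
    using homogeneous_extend_automorphism[OF hom, of "map f ?ds" "map g ?ds"] f g
    by (auto simp: distinct_map)
  then have "map h (map f xs) = map g xs"
    by (auto intro!: map_idI dest!: map_eq_conv[THEN iffD1])
  moreover have "R i (map h (map f xs)) \<longleftrightarrow> R i (map f xs)"
    using h(1) assms(2,3) f(2) unfolding automorphism_def by (metis image_set length_map)
  ultimately show ?thesis by argo
qed

definition presentations_coincide :: "nat list \<Rightarrow> 'a set \<Rightarrow> (nat \<Rightarrow> 'a list \<Rightarrow> bool) \<Rightarrow> bool" where
  "presentations_coincide ar A R \<longleftrightarrow>
     (\<forall>P Q. presentation ar A R P \<longrightarrow> presentation ar A R Q \<longrightarrow> nat_iso ar P Q id)"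

lemma presentations_coincideD:
  assumes "presentations_coincide ar A R" "presentation ar A R P" "presentation ar A R Q"
    and "i < length ar" "length xs = ar ! i"
  shows "P i xs \<longleftrightarrow> Q i xs"
  using assms by (simp add: presentations_coincide_def nat_iso_def)

lemma presentation_of_enumeration:
  assumes "bij_betw f UNIV A"
  shows "presentation ar A R (\<lambda>i xs. R i (map f xs))"
  using assms by (auto simp: presentation_def)

lemma homogeneous_imp_presentations_coincide:
  assumes "homogeneous ar A R"
  shows "presentations_coincide ar A R"
  unfolding presentations_coincide_def nat_iso_def
proof (intro allI impI conjI)
  fix P Q i and xs :: "nat list"
  assume "presentation ar A R P" "presentation ar A R Q" and i: "i < length ar" "length xs = ar ! i"
  then obtain f g where f: "bij_betw f UNIV A" "P i xs \<longleftrightarrow> R i (map f xs)"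
    and g: "bij_betw g UNIV A" "Q i xs \<longleftrightarrow> R i (map g xs)"
    by (auto simp: presentation_def)
  have "R i (map f xs) \<longleftrightarrow> R i (map g xs)"
    using f(1) g(1)
    by (intro homogeneous_relation_invariant[OF assms i])
      (auto simp: bij_betw_def intro: inj_on_subset)
  then show "P i xs \<longleftrightarrow> Q i (map id xs)"
    using f(2) g(2) by simp
qed (simp add: bij_id)

lemma inj_le_self_imp_id:
  fixes \<sigma> :: "nat \<Rightarrow> nat"
  assumes "inj \<sigma>" "\<And>i. \<sigma> i \<le> i"
  shows "\<sigma> = id"
proof
  fix i show "\<sigma> i = id i"
  proof (induction i rule: less_induct)
    case (less i)
    show ?case
    proof (rule ccontr)
      assume "\<sigma> i \<noteq> id i"
      then have "\<sigma> i < i"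
        using assms(2)[of i] by (auto simp: le_less)
      then have "\<sigma> (\<sigma> i) = \<sigma> i"
        using less by simp
      then show False
        using assms(1) \<open>\<sigma> i \<noteq> id i\<close> by (simp add: inj_eq)
    qed
  qed
qed

lemma online_iso_witness_imp_presentations_coincide:
  assumes "online_iso_witness ar A R F"
  shows "presentations_coincide ar A R"
  unfolding presentations_coincide_def
proof (intro allI impI)
  fix P Q assume "presentation ar A R P" "presentation ar A R Q"
  moreover define \<sigma> where "\<sigma> i = F (diag_code ar P (Suc i)) (diag_code ar Q (Suc i)) i" for i
  ultimately have "\<And>i. \<sigma> i \<le> i" "nat_iso ar P Q \<sigma>"
    using assms by (simp_all add: online_iso_witness_def \<sigma>_def[abs_def])
  moreover from this have "\<sigma> = id"
    by (intro inj_le_self_imp_id) (simp_all add: nat_iso_def bij_is_inj)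
  ultimately show "nat_iso ar P Q id" by simp
qed

lemma presentations_coincide_imp_online_iso_witness:
  assumes "presentations_coincide ar A R"
  shows "online_iso_witness ar A R (\<lambda>_ _ i. i)"
  using assms by (simp add: online_iso_witness_def presentations_coincide_def id_def)

lemma automorphism_of_equivalent_enumerations:
  assumes f: "bij_betw f UNIV A" and g: "bij_betw g UNIV A"
    and fg: "\<forall>i < length ar. \<forall>xs. length xs = ar ! i \<longrightarrow> (R i (map f xs) \<longleftrightarrow> R i (map g xs))"
  shows "automorphism ar A R (g \<circ> inv_into UNIV f)"
  unfolding automorphism_def
proof (intro conjI allI impI)
  show "bij_betw (g \<circ> inv_into UNIV f) A A"
    using f g bij_betw_inv_into bij_betw_trans by blast
next
  fix i ys assume i: "i < length ar" and ys: "set ys \<subseteq> A" "length ys = ar ! i"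
  let ?xs = "map (inv_into UNIV f) ys"
  have "map f ?xs = ys"
    using ys f by (auto simp: bij_betw_def f_inv_into_f intro!: map_idI)
  then show "R i (map (g \<circ> inv_into UNIV f) ys) \<longleftrightarrow> R i ys"
    using fg i ys by (metis length_map map_map)
qed

lemma presentations_coincide_imp_homogeneous:
  assumes "countable A" "infinite A" and coincide: "presentations_coincide ar A R"
  shows "homogeneous ar A R"
  unfolding homogeneous_def
proof (intro allI impI)
  fix xs y z assume xs: "set xs \<subseteq> A" and "y \<in> A" "z \<in> A" "y \<notin> set xs" "z \<notin> set xs"
  let ?ws = "remdups xs"
  let ?n = "length ?ws"
  obtain f where f: "bij_betw f UNIV A" "\<And>i. i < length (?ws @ [y]) \<Longrightarrow> f i = (?ws @ [y]) ! i"
    using enumeration_with_prefix[OF assms(1,2), of "?ws @ [y]"] xs \<open>y \<in> A\<close> \<open>y \<notin> set xs\<close>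
    by auto
  obtain g where g: "bij_betw g UNIV A" "\<And>i. i < length (?ws @ [z]) \<Longrightarrow> g i = (?ws @ [z]) ! i"
    using enumeration_with_prefix[OF assms(1,2), of "?ws @ [z]"] xs \<open>z \<in> A\<close> \<open>z \<notin> set xs\<close>
    by auto
  let ?h = "g \<circ> inv_into UNIV f"
  have "automorphism ar A R ?h"
    using presentations_coincideD[OF coincide presentation_of_enumeration[OF f(1)]
        presentation_of_enumeration[OF g(1)]]
    by (intro automorphism_of_equivalent_enumerations f(1) g(1)) blast
  moreover have h_f: "?h (f j) = g j" for j
    using f(1) by (simp add: bij_betw_def)
  have "\<forall>x\<in>set xs. ?h x = x"
  proof
    fix x assume "x \<in> set xs"
    then obtain j where "j < ?n" "?ws ! j = x"
      by (metis in_set_conv_nth set_remdups)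
    then show "?h x = x"
      using f(2)[of j] g(2)[of j] h_f[of j] by (simp add: nth_append)
  qed
  moreover have "?h y = z"
    using f(2)[of ?n] g(2)[of ?n] h_f[of ?n] by simp
  ultimately show "\<exists>h. automorphism ar A R h \<and> (\<forall>x\<in>set xs. h x = x) \<and> h y = z"
    by blast
qed

lemma prim_rec3_third_projection: "prim_rec3 (\<lambda>_ _ i. i)"
  unfolding prim_rec3_def by (rule pr_proj[of 2 3, simplified])

theorem mainTheorem3:
  fixes ar :: "nat list" and A :: "'a set" and R :: "nat \<Rightarrow> 'a list \<Rightarrow> bool"
  assumes "countable A" and "infinite A"
  shows "(strongly_online_categorical ar A R \<longleftrightarrow> homogeneous ar A R) \<and>
         (total_online_categorical ar A R \<longrightarrow> homogeneous ar A R)"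
proof -
  have online_imp_hom: "online_iso_witness ar A R F \<Longrightarrow> homogeneous ar A R" for F
    using assms online_iso_witness_imp_presentations_coincide
      presentations_coincide_imp_homogeneous by blast
  have "homogeneous ar A R \<Longrightarrow> online_iso_witness ar A R (\<lambda>_ _ i. i)"
    by (intro presentations_coincide_imp_online_iso_witness
        homogeneous_imp_presentations_coincide)
  then show ?thesis
    using online_imp_hom prim_rec3_third_projection
    unfolding strongly_online_categorical_def total_online_categorical_def by blast
qed

end
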